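(* Let $I=(0,T)$ with $T>0$ and $r\in\mathbb N\cup\{0\}$. There exist $\gamma>0$ and a sequence $(\alpha_j)_{j\in\mathbb N}\subset C_c^\infty(I)$ such that $$0<\gamma\le\|\alpha_j\|_{W^{r,\infty}(I)}\le1\quad\text{for all } j\in\mathbb N,$$ and $\alpha_j\cdot\phi\to0$ in $H^m(I)$ as $j\to\infty$ for every fixed $\phi\in H^m(I)$ and every $m=0,\dots,r$.
   Context: $W^{r,\infty}(I)$ and $H^m(I)=W^{m,2}(I)$ are the usual Sobolev spaces of real functions on the interval $I$; $C_c^\infty(I)$ denotes smooth functions with compact support in $I$. *)

theory Defs
  imports "HOL-Analysis.Analysis"
begin

definition test_fun :: "real set \<Rightarrow> (real \<Rightarrow> real) \<Rightarrow> bool" where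
  "test_fun I f \<longleftrightarrow>
     (\<forall>k. \<forall>x\<in>I. ((deriv ^^ k) f) differentiable (at x)) \<and>
     compact (closure {x\<in>I. f x \<noteq> 0}) \<and> closure {x\<in>I. f x \<noteq> 0} \<subseteq> I"

text \<open>W^{r,\<infinity>}(I) norm of a smooth function: sum over k \<le> r of sup norms of the
  classical derivatives on I (for smooth functions the essential sup equals the sup).\<close>
definition W_inf_norm :: "real set \<Rightarrow> nat \<Rightarrow> (real \<Rightarrow> real) \<Rightarrow> real" where
  "W_inf_norm I r f = (\<Sum>k\<le>r. (SUP x\<in>I. \<bar>(deriv ^^ k) f x\<bar>))"

definition L2_on :: "real set \<Rightarrow> (real \<Rightarrow> real) \<Rightarrow> bool" where
  "L2_on I f \<longleftrightarrow> f \<in> borel_measurable (restrict_space lebesgue I) \<and>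
     set_integrable lebesgue I (\<lambda>x. (f x)^2)"

definition weak_deriv_of :: "real set \<Rightarrow> nat \<Rightarrow> (real \<Rightarrow> real) \<Rightarrow> (real \<Rightarrow> real) \<Rightarrow> bool" where
  "weak_deriv_of I k f g \<longleftrightarrow>
     (\<forall>\<psi>. test_fun I \<psi> \<longrightarrow>
        set_integrable lebesgue I (\<lambda>x. f x * (deriv ^^ k) \<psi> x) \<and>
        set_integrable lebesgue I (\<lambda>x. g x * \<psi> x) \<and>
        (LINT x:I|lebesgue. f x * (deriv ^^ k) \<psi> x) = (-1)^k * (LINT x:I|lebesgue. g x * \<psi> x))"

definition in_Hm :: "real set \<Rightarrow> nat \<Rightarrow> (real \<Rightarrow> real) \<Rightarrow> bool" where
  "in_Hm I m f \<longleftrightarrow> L2_on I f \<and> (\<forall>k\<le>m. \<exists>g. L2_on I g \<and> weak_deriv_of I k f g)"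

definition weak_deriv :: "real set \<Rightarrow> nat \<Rightarrow> (real \<Rightarrow> real) \<Rightarrow> real \<Rightarrow> real" where
  "weak_deriv I k f = (SOME g. L2_on I g \<and> weak_deriv_of I k f g)"

definition Hm_norm :: "real set \<Rightarrow> nat \<Rightarrow> (real \<Rightarrow> real) \<Rightarrow> real" where
  "Hm_norm I m f = sqrt (\<Sum>k\<le>m. (LINT x:I|lebesgue. (weak_deriv I k f x)^2))"

end

theory Submission
  imports Defs "HOL-Computational_Algebra.Polynomial"
begin

text \<open>Fix a smooth bump \<beta> supported in [0, 1] and let
  \<alpha>_j(x) = c s_j^(-r) \<beta>(s_j (x - T/2)) with s_j \<rightarrow> \<infinity>. The k-th derivative of \<alpha>_j is
  c s_j^(k-r) \<beta>^(k)(s_j (x - T/2)); for k \<le> r it is bounded by c sup |\<beta>^(k)|, so a small c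
  makes the W^(r,\<infinity>) norm at most 1, whereas the r-th derivative takes the value c \<beta>^(r)(t) for
  every j, which gives \<gamma>. As the supports shrink to the point T/2, all these derivatives tend to 0
  pointwise while staying uniformly bounded. By the Leibniz rule for weak derivatives,
  D^k(\<alpha>_j \<phi>) = \<Sum>_i (k choose i) \<alpha>_j^(i) D^(k-i) \<phi>, so dominated convergence gives
  \<alpha>_j \<phi> \<rightarrow> 0 in H^m. Since the H^m norm is computed from an arbitrarily chosen weak
  derivative, this needs uniqueness of weak derivatives almost everywhere (the fundamental lemma of
  the calculus of variations).\<close>

section \<open>Towers of derivatives\<close>

definition deriv_tower :: "real set \<Rightarrow> (nat \<Rightarrow> real \<Rightarrow> real) \<Rightarrow> bool" where
  "deriv_tower U D \<longleftrightarrow> (\<forall>k. \<forall>x\<in>U. (D k has_real_derivative D (Suc k) x) (at x))"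

lemma deriv_tower_subset: "deriv_tower U D \<Longrightarrow> V \<subseteq> U \<Longrightarrow> deriv_tower V D"
  unfolding deriv_tower_def by blast

lemma deriv_tower_shift: "deriv_tower U D \<Longrightarrow> deriv_tower U (\<lambda>k. D (k + j))"
  unfolding deriv_tower_def by simp

lemma deriv_tower_continuous_on: "deriv_tower U D \<Longrightarrow> continuous_on U (D k)"
  unfolding deriv_tower_def by (meson DERIV_isCont continuous_at_imp_continuous_on)

lemma deriv_tower_funpow_deriv:
  assumes "open U" "deriv_tower U D" "x \<in> U"
  shows "(deriv ^^ k) (D 0) x = D k x"
  using assms(3)
proof (induction k arbitrary: x)
  case (Suc k)
  have "(D k has_real_derivative D (Suc k) x) (at x)"
    using assms(2) Suc.prems unfolding deriv_tower_def by blast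
  then have "((deriv ^^ k) (D 0) has_real_derivative D (Suc k) x) (at x)"
    by (rule has_field_derivative_transform_within_open[OF _ assms(1) Suc.prems]) (use Suc.IH in auto)
  then show ?case by (simp add: DERIV_imp_deriv)
qed simp

lemma deriv_tower_differentiable:
  assumes "open U" "deriv_tower U D" "x \<in> U"
  shows "(deriv ^^ k) (D 0) differentiable (at x)"
proof -
  have "(D k has_real_derivative D (Suc k) x) (at x)"
    using assms unfolding deriv_tower_def by blast
  then have "((deriv ^^ k) (D 0) has_real_derivative D (Suc k) x) (at x)"
    by (rule has_field_derivative_transform_within_open[OF _ assms(1,3)])
       (use deriv_tower_funpow_deriv[OF assms(1,2)] in auto)
  then show ?thesis using real_differentiable_def by blast
qed

lemma deriv_tower_vanishing:
  assumes "deriv_tower UNIV D" "\<And>k. D k c = 0" "\<And>t. D r t = 0" "k \<le> r"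
  shows "D k t = 0"
  using assms(4)
proof (induction "r - k" arbitrary: k t)
  case 0
  then show ?case using assms(3) by simp
next
  case (Suc n)
  then have "D (Suc k) x = 0" for x
    using Suc.hyps(1)[of "Suc k"] by simp
  then have "(D k has_real_derivative 0) (at x)" for x
    using assms(1) unfolding deriv_tower_def by (metis UNIV_I)
  then have "D k t = D k c" by (simp add: DERIV_isconst_all)
  then show ?case using assms(2) by simp
qed

definition leibniz_prod :: "(nat \<Rightarrow> real \<Rightarrow> real) \<Rightarrow> (nat \<Rightarrow> real \<Rightarrow> real) \<Rightarrow> nat \<Rightarrow> real \<Rightarrow> real" where
  "leibniz_prod D E k x = (\<Sum>i\<le>k. real (k choose i) * (D i x * E (k - i) x))"

lemma leibniz_prod_0 [simp]: "leibniz_prod D E 0 x = D 0 x * E 0 x"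
  by (simp add: leibniz_prod_def)

lemma leibniz_prod_Suc:
  "(\<Sum>i\<le>k. real (k choose i) * (D (Suc i) x * E (k - i) x + D i x * E (Suc (k - i)) x))
     = leibniz_prod D E (Suc k) x"
proof -
  let ?a = "\<lambda>i. D i x" and ?b = "\<lambda>i. E i x"
  have "leibniz_prod D E (Suc k) x
      = ?a 0 * ?b (Suc k) + (\<Sum>i\<le>k. real (Suc k choose Suc i) * (?a (Suc i) * ?b (k - i)))"
    unfolding leibniz_prod_def by (subst sum.atMost_Suc_shift) simp
  also have "(\<Sum>i\<le>k. real (Suc k choose Suc i) * (?a (Suc i) * ?b (k - i)))
      = (\<Sum>i\<le>k. real (k choose i) * (?a (Suc i) * ?b (k - i)))
        + (\<Sum>i\<le>k. real (k choose Suc i) * (?a (Suc i) * ?b (k - i)))"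
    by (simp add: sum.distrib[symmetric] algebra_simps)
  also have "(\<Sum>i\<le>k. real (k choose Suc i) * (?a (Suc i) * ?b (k - i)))
      = (\<Sum>i\<le>Suc k. real (k choose i) * (?a i * ?b (Suc k - i))) - ?a 0 * ?b (Suc k)"
    by (subst sum.atMost_Suc_shift) simp
  also have "(\<Sum>i\<le>Suc k. real (k choose i) * (?a i * ?b (Suc k - i)))
      = (\<Sum>i\<le>k. real (k choose i) * (?a i * ?b (Suc (k - i))))"
    by (simp add: Suc_diff_le)
  finally show ?thesis
    by (simp add: sum.distrib algebra_simps)
qed

lemma deriv_tower_leibniz_prod:
  assumes "deriv_tower U D" "deriv_tower U E"
  shows "deriv_tower U (leibniz_prod D E)"
  unfolding deriv_tower_def
proof (intro allI ballI)
  fix k x assume "x \<in> U"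
  then have dD: "\<And>i. (D i has_real_derivative D (Suc i) x) (at x)"
    and dE: "\<And>i. (E i has_real_derivative E (Suc i) x) (at x)"
    using assms unfolding deriv_tower_def by auto
  have "((\<lambda>x. \<Sum>i\<le>k. real (k choose i) * (D i x * E (k - i) x)) has_real_derivative
        (\<Sum>i\<le>k. real (k choose i) * (D (Suc i) x * E (k - i) x + D i x * E (Suc (k - i)) x))) (at x)"
    by (intro DERIV_sum DERIV_cmult DERIV_mult[OF dD dE, THEN DERIV_cong]) (simp add: algebra_simps)
  then show "(leibniz_prod D E k has_real_derivative leibniz_prod D E (Suc k) x) (at x)"
    unfolding leibniz_prod_Suc by (simp add: leibniz_prod_def[abs_def])
qed

definition affine_tower :: "real \<Rightarrow> real \<Rightarrow> real \<Rightarrow> (nat \<Rightarrow> real \<Rightarrow> real) \<Rightarrow> nat \<Rightarrow> real \<Rightarrow> real" where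
  "affine_tower c a b D k x = c * a ^ k * D k (a * x + b)"

lemma deriv_tower_affine:
  assumes "deriv_tower UNIV D"
  shows "deriv_tower UNIV (affine_tower c a b D)"
  unfolding deriv_tower_def affine_tower_def
proof (intro allI ballI)
  fix k and x :: real
  have "(D k has_real_derivative D (Suc k) (a * x + b)) (at (a * x + b))"
    using assms unfolding deriv_tower_def by auto
  then have "((\<lambda>x. D k (a * x + b)) has_real_derivative D (Suc k) (a * x + b) * a) (at x)"
    by (rule DERIV_chain2) (auto intro!: derivative_eq_intros)
  then show "((\<lambda>x. c * a ^ k * D k (a * x + b)) has_real_derivative c * a ^ Suc k * D (Suc k) (a * x + b)) (at x)"
    by (rule DERIV_cmult[THEN DERIV_cong]) (simp add: algebra_simps)
qed

section \<open>A bump function and a smooth step\<close>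

lemma poly_times_exp_minus_tendsto_0: "((\<lambda>u. poly q u * exp (- u)) \<longlongrightarrow> (0::real)) at_top"
proof -
  have "((\<lambda>u. \<Sum>i\<le>degree q. coeff q i * (u ^ i / exp u)) \<longlongrightarrow> (\<Sum>i\<le>degree q. coeff q i * 0)) at_top"
    by (intro tendsto_intros tendsto_power_div_exp_0)
  then show ?thesis
    by (simp add: poly_altdef sum_divide_distrib exp_minus field_simps)
qed

lemma poly_inverse_times_exp_tendsto_0:
  "((\<lambda>t. poly q (1 / t) * exp (- (1 / t))) \<longlongrightarrow> (0::real)) (at_right 0)"
  using filterlim_compose[OF poly_times_exp_minus_tendsto_0 filterlim_inverse_at_top_right]
  by (simp add: divide_inverse)

lemma has_real_derivative_poly_inverse_exp:
  assumes "t > 0"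
  shows "((\<lambda>t. poly p (1 / t) * exp (- (1 / t))) has_real_derivative
          poly ([:0, 0, 1:] * (p - pderiv p)) (1 / t) * exp (- (1 / t))) (at t)"
proof -
  have "((\<lambda>t. poly p (1 / t) * exp (- (1 / t))) has_real_derivative
     poly (pderiv p) (1 / t) * (- 1 / t^2) * exp (- (1 / t)) + poly p (1 / t) * (exp (- (1 / t)) * (1 / t^2))) (at t)"
    using assms
    by (auto intro!: derivative_eq_intros DERIV_chain2[of "poly p", OF poly_DERIV]
             simp: power2_eq_square field_simps)
  then show ?thesis
    by (rule DERIV_cong) (use assms in \<open>simp add: power2_eq_square field_simps\<close>)
qed

text \<open>\<open>flat k\<close> is the \<open>k\<close>-th derivative of the function that is \<open>exp (-1/t)\<close> for \<open>t > 0\<close> and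
  \<open>0\<close> for \<open>t \<le> 0\<close>; all of them vanish at \<open>0\<close>.\<close>

primrec flat_poly :: "nat \<Rightarrow> real poly" where
  "flat_poly 0 = 1"
| "flat_poly (Suc k) = [:0, 0, 1:] * (flat_poly k - pderiv (flat_poly k))"

definition flat :: "nat \<Rightarrow> real \<Rightarrow> real" where
  "flat k t = (if t > 0 then poly (flat_poly k) (1 / t) * exp (- (1 / t)) else 0)"

lemma flat_has_derivative_0: "(flat k has_real_derivative 0) (at 0)"
proof -
  have "((\<lambda>t. (flat k t - flat k 0) / (t - 0)) \<longlongrightarrow> 0) (at 0)"
  proof (rule filterlim_split_at)
    show "((\<lambda>t. (flat k t - flat k 0) / (t - 0)) \<longlongrightarrow> 0) (at_left 0)"
      by (rule Lim_transform_eventually[OF tendsto_const])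
         (auto simp: eventually_at_filter flat_def)
    show "((\<lambda>t. (flat k t - flat k 0) / (t - 0)) \<longlongrightarrow> 0) (at_right 0)"
      by (rule Lim_transform_eventually[OF poly_inverse_times_exp_tendsto_0[of "pCons 0 (flat_poly k)"]])
         (auto simp: eventually_at_filter flat_def)
  qed
  then show ?thesis by (simp add: has_field_derivative_iff)
qed

lemma deriv_tower_flat: "deriv_tower UNIV flat"
  unfolding deriv_tower_def
proof (intro allI ballI)
  fix k and t :: real
  consider "t > 0" | "t < 0" | "t = 0" by linarith
  then show "(flat k has_real_derivative flat (Suc k) t) (at t)"
  proof cases
    case 1
    have "((\<lambda>t. poly (flat_poly k) (1 / t) * exp (- (1 / t))) has_real_derivative flat (Suc k) t) (at t)"
      using has_real_derivative_poly_inverse_exp[OF 1, of "flat_poly k"] 1 by (simp add: flat_def)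
    then show ?thesis
      by (rule has_field_derivative_transform_within_open[of _ _ _ "{0<..}"]) (use 1 in \<open>auto simp: flat_def\<close>)
  next
    case 2
    have "((\<lambda>_. 0) has_real_derivative flat (Suc k) t) (at t)"
      using 2 by (simp add: flat_def)
    then show ?thesis
      by (rule has_field_derivative_transform_within_open[of _ _ _ "{..<0}"]) (use 2 in \<open>auto simp: flat_def\<close>)
  qed (simp add: flat_has_derivative_0 flat_def)
qed

definition bump :: "nat \<Rightarrow> real \<Rightarrow> real" where
  "bump = leibniz_prod flat (affine_tower 1 (-1) 1 flat)"

lemma deriv_tower_bump: "deriv_tower UNIV bump"
  unfolding bump_def by (intro deriv_tower_leibniz_prod deriv_tower_affine deriv_tower_flat)

lemma bump_0: "bump 0 t = (if 0 < t \<and> t < 1 then exp (- (1 / t)) * exp (- (1 / (1 - t))) else 0)"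
  by (simp add: bump_def affine_tower_def flat_def)

lemma bump_0_pos: "0 < t \<Longrightarrow> t < 1 \<Longrightarrow> bump 0 t > 0"
  by (simp add: bump_0)

lemma bump_0_nonneg: "bump 0 t \<ge> 0"
  by (simp add: bump_0)

lemma bump_eq_0: "t \<le> 0 \<or> t \<ge> 1 \<Longrightarrow> bump k t = 0"
  by (auto simp: bump_def leibniz_prod_def affine_tower_def flat_def intro!: sum.neutral)

lemma bump_not_identically_0: "\<exists>t. bump r t \<noteq> 0"
proof (rule ccontr)
  assume "\<not> (\<exists>t. bump r t \<noteq> 0)"
  then have "bump r t = 0" for t by simp
  then have "bump 0 (1/2) = 0"
    using deriv_tower_vanishing[OF deriv_tower_bump, of "-1" r 0 "1/2"] by (simp add: bump_eq_0)
  then show False using bump_0_pos[of "1/2"] by simp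
qed

lemma bounded_bump: "bounded (range (bump k))"
proof -
  have "bounded (bump k ` {0..1})"
    by (intro compact_imp_bounded compact_continuous_image
        continuous_on_subset[OF deriv_tower_continuous_on[OF deriv_tower_bump]]) auto
  moreover have "bump k t \<in> insert 0 (bump k ` {0..1})" for t
    by (cases "0 \<le> t \<and> t \<le> 1") (auto simp: bump_eq_0)
  ultimately show ?thesis by (meson bounded_insert bounded_subset image_subsetI)
qed

definition bump_sup :: "nat \<Rightarrow> real" where
  "bump_sup k = (SUP t. \<bar>bump k t\<bar>)"

lemma abs_bump_le_sup: "\<bar>bump k t\<bar> \<le> bump_sup k"
  unfolding bump_sup_def using bounded_bump[of k]
  by (intro cSUP_upper) (auto simp: bounded_real bdd_above_def)

lemma bump_sup_nonneg: "0 \<le> bump_sup k"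
  using abs_bump_le_sup[of k 0] by linarith

lemma bump_0_integrable: "bump 0 integrable_on {a..b}"
  by (intro integrable_continuous_interval continuous_on_subset[OF deriv_tower_continuous_on[OF deriv_tower_bump]]) auto

definition bump_mass :: real where
  "bump_mass = integral {0..1} (bump 0)"

lemma bump_mass_pos: "bump_mass > 0"
proof -
  have "0 \<le> bump_mass" unfolding bump_mass_def
    by (rule Henstock_Kurzweil_Integration.integral_nonneg[OF bump_0_integrable]) (simp add: bump_0_nonneg)
  moreover have "bump_mass \<noteq> 0"
  proof
    assume "bump_mass = 0"
    then have "\<forall>x\<in>{0..1}. bump 0 x = 0" unfolding bump_mass_def
      by (subst (asm) integral_eq_0_iff)
         (auto intro: continuous_on_subset[OF deriv_tower_continuous_on[OF deriv_tower_bump]] bump_0_nonneg)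
    then show False using bump_0_pos[of "1/2"] by auto
  qed
  ultimately show ?thesis by simp
qed

lemma integral_bump_0_from_below:
  assumes "a \<le> 0"
  shows "integral {a..u} (bump 0) = integral {0..u} (bump 0)"
proof (cases "u < 0")
  case True
  have "integral {a..u} (bump 0) = integral {a..u} (\<lambda>_. 0)"
    by (rule integral_cong) (use True bump_eq_0 in auto)
  then show ?thesis using True by simp
next
  case False
  have "integral {a..0} (bump 0) + integral {0..u} (bump 0) = integral {a..u} (bump 0)"
    by (rule Henstock_Kurzweil_Integration.integral_combine) (use assms False bump_0_integrable in auto)
  moreover have "integral {a..0} (bump 0) = integral {a..0} (\<lambda>_. 0)"
    by (rule integral_cong) (use bump_eq_0 in auto)
  ultimately show ?thesis by simp
qed

definition smooth_step :: "real \<Rightarrow> real" where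
  "smooth_step t = integral {0..t} (bump 0) / bump_mass"

lemma smooth_step_has_derivative: "(smooth_step has_real_derivative bump 0 x / bump_mass) (at x)"
proof -
  define a where "a = - (\<bar>x\<bar> + 1)"
  define b where "b = \<bar>x\<bar> + 1"
  have "((\<lambda>u. integral {a..u} (bump 0)) has_real_derivative bump 0 x) (at x within {a..b})"
    by (rule integral_has_real_derivative)
       (auto simp: a_def b_def intro: continuous_on_subset[OF deriv_tower_continuous_on[OF deriv_tower_bump]])
  moreover have "at x within {a..b} = at x"
    by (rule at_within_interior) (auto simp: a_def b_def)
  moreover have "(\<lambda>u. integral {a..u} (bump 0)) = (\<lambda>u. integral {0..u} (bump 0))"
    using integral_bump_0_from_below[of a] by (auto simp: a_def)
  ultimately have "((\<lambda>u. integral {0..u} (bump 0)) has_real_derivative bump 0 x) (at x)"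
    by simp
  then show ?thesis unfolding smooth_step_def by (rule DERIV_cdivide)
qed

definition smooth_step_tower :: "nat \<Rightarrow> real \<Rightarrow> real" where
  "smooth_step_tower k = (case k of 0 \<Rightarrow> smooth_step | Suc j \<Rightarrow> (\<lambda>t. bump j t / bump_mass))"

lemma deriv_tower_smooth_step: "deriv_tower UNIV smooth_step_tower"
  unfolding deriv_tower_def
proof (intro allI ballI)
  fix k and x :: real
  show "(smooth_step_tower k has_real_derivative smooth_step_tower (Suc k) x) (at x)"
  proof (cases k)
    case 0
    then show ?thesis using smooth_step_has_derivative[of x] by (simp add: smooth_step_tower_def)
  next
    case (Suc j)
    have "(bump j has_real_derivative bump (Suc j) x) (at x)"
      using deriv_tower_bump unfolding deriv_tower_def by auto
    then show ?thesis using Suc by (simp add: smooth_step_tower_def DERIV_cdivide)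
  qed
qed

lemma smooth_step_eq_0: "t \<le> 0 \<Longrightarrow> smooth_step t = 0"
  by (cases "t = 0") (auto simp: smooth_step_def)

lemma smooth_step_eq_1:
  assumes "t \<ge> 1"
  shows "smooth_step t = 1"
proof -
  have "integral {0..1} (bump 0) + integral {1..t} (bump 0) = integral {0..t} (bump 0)"
    by (rule Henstock_Kurzweil_Integration.integral_combine) (use assms bump_0_integrable in auto)
  moreover have "integral {1..t} (bump 0) = integral {1..t} (\<lambda>_. 0)"
    by (rule integral_cong) (use bump_eq_0 in auto)
  ultimately show ?thesis using bump_mass_pos by (simp add: smooth_step_def bump_mass_def)
qed

lemma smooth_step_bounds: "0 \<le> smooth_step t \<and> smooth_step t \<le> 1"
proof (cases "0 < t \<and> t < 1")
  case True
  have "integral {0..t} (bump 0) + integral {t..1} (bump 0) = bump_mass"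
    unfolding bump_mass_def
    by (rule Henstock_Kurzweil_Integration.integral_combine) (use True bump_0_integrable in auto)
  moreover have "0 \<le> integral {t..1} (bump 0)" "0 \<le> integral {0..t} (bump 0)"
    by (rule Henstock_Kurzweil_Integration.integral_nonneg[OF bump_0_integrable], simp add: bump_0_nonneg)+
  ultimately show ?thesis using bump_mass_pos by (simp add: smooth_step_def field_simps)
qed (auto simp: not_less smooth_step_eq_0 smooth_step_eq_1)

section \<open>Square-integrable functions and test functions\<close>

lemma set_integral_lebesgue_on:
  fixes f :: "real \<Rightarrow> real"
  assumes "I \<in> sets lebesgue"
  shows "(LINT x:I|lebesgue. f x) = integral\<^sup>L (lebesgue_on I) f"
  unfolding set_lebesgue_integral_def using integral_restrict_space[of I lebesgue f] assms by simp

lemma L2_on_iff: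
  assumes "I \<in> sets lebesgue"
  shows "L2_on I f \<longleftrightarrow> f \<in> borel_measurable (lebesgue_on I) \<and> integrable (lebesgue_on I) (\<lambda>x. (f x)^2)"
proof -
  have "I \<inter> space lebesgue \<in> sets lebesgue" using assms by simp
  show ?thesis unfolding L2_on_def set_integrable_eq[OF \<open>I \<inter> space lebesgue \<in> sets lebesgue\<close>] ..
qed

lemma L2_on_mult_integrable:
  assumes "I \<in> sets lebesgue" "L2_on I f" "L2_on I g"
  shows "integrable (lebesgue_on I) (\<lambda>x. f x * g x)"
proof (rule Bochner_Integration.integrable_bound[of _ "\<lambda>x. (f x)^2 + (g x)^2"])
  show "integrable (lebesgue_on I) (\<lambda>x. (f x)^2 + (g x)^2)"
    using assms by (simp add: L2_on_iff)
  have [measurable]: "f \<in> borel_measurable (lebesgue_on I)" "g \<in> borel_measurable (lebesgue_on I)"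
    using assms by (simp_all add: L2_on_iff)
  show "(\<lambda>x. f x * g x) \<in> borel_measurable (lebesgue_on I)"
    by measurable
  have "\<bar>f x * g x\<bar> \<le> (f x)^2 + (g x)^2" for x
  proof -
    have "2 * \<bar>f x * g x\<bar> \<le> (f x)^2 + (g x)^2"
      using sum_squares_bound[of "\<bar>f x\<bar>" "\<bar>g x\<bar>"] by (simp add: abs_mult mult.assoc)
    then show ?thesis using abs_ge_zero[of "f x * g x"] by linarith
  qed
  then show "AE x in lebesgue_on I. norm (f x * g x) \<le> norm ((f x)^2 + (g x)^2)"
    by simp
qed

lemma L2_on_add:
  assumes "I \<in> sets lebesgue" "L2_on I f" "L2_on I g"
  shows "L2_on I (\<lambda>x. f x + g x)"
proof -
  have [measurable]: "f \<in> borel_measurable (lebesgue_on I)" "g \<in> borel_measurable (lebesgue_on I)"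
    using assms by (simp_all add: L2_on_iff)
  have "integrable (lebesgue_on I) (\<lambda>x. (f x + g x)^2)"
  proof (rule Bochner_Integration.integrable_bound[of _ "\<lambda>x. 2 * (f x)^2 + 2 * (g x)^2"])
    show "integrable (lebesgue_on I) (\<lambda>x. 2 * (f x)^2 + 2 * (g x)^2)"
      using assms by (simp add: L2_on_iff)
    show "(\<lambda>x. (f x + g x)^2) \<in> borel_measurable (lebesgue_on I)"
      by measurable
    have "(f x + g x)^2 \<le> 2 * (f x)^2 + 2 * (g x)^2" for x
      using zero_le_power2[of "f x - g x"] by (simp add: power2_eq_square algebra_simps)
    then show "AE x in lebesgue_on I. norm ((f x + g x)^2) \<le> norm (2 * (f x)^2 + 2 * (g x)^2)"
      by simp
  qed
  moreover have "(\<lambda>x. f x + g x) \<in> borel_measurable (lebesgue_on I)"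
    by measurable
  ultimately show ?thesis using assms by (simp add: L2_on_iff)
qed

lemma L2_on_cmult: "I \<in> sets lebesgue \<Longrightarrow> L2_on I f \<Longrightarrow> L2_on I (\<lambda>x. c * f x)"
  by (simp add: L2_on_iff power_mult_distrib borel_measurable_times)

lemma L2_on_abs: "I \<in> sets lebesgue \<Longrightarrow> L2_on I f \<Longrightarrow> L2_on I (\<lambda>x. \<bar>f x\<bar>)"
  by (simp add: L2_on_iff borel_measurable_abs)

lemma L2_on_sum:
  assumes "I \<in> sets lebesgue" "finite S" "\<And>i. i \<in> S \<Longrightarrow> L2_on I (f i)"
  shows "L2_on I (\<lambda>x. \<Sum>i\<in>S. f i x)"
  using assms(2,3)
proof (induction S rule: finite_induct)
  case empty
  then show ?case using assms(1) by (simp add: L2_on_iff)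
next
  case (insert a S)
  then show ?case using L2_on_add[OF assms(1)] by simp
qed

lemma L2_on_mult_bounded:
  assumes "I \<in> sets lebesgue" "b \<in> borel_measurable (lebesgue_on I)" "\<And>x. x \<in> I \<Longrightarrow> \<bar>b x\<bar> \<le> B"
    and "L2_on I f"
  shows "L2_on I (\<lambda>x. b x * f x)"
proof -
  have "integrable (lebesgue_on I) (\<lambda>x. (b x * f x)^2)"
  proof (rule Bochner_Integration.integrable_bound[of _ "\<lambda>x. B^2 * (f x)^2"])
    show "integrable (lebesgue_on I) (\<lambda>x. B^2 * (f x)^2)"
      using assms by (simp add: L2_on_iff)
    have [measurable]: "f \<in> borel_measurable (lebesgue_on I)"
      using assms by (simp add: L2_on_iff)
    show "(\<lambda>x. (b x * f x)^2) \<in> borel_measurable (lebesgue_on I)"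
      using assms(2) by measurable
    have "(b x * f x)^2 \<le> B^2 * (f x)^2" if "x \<in> I" for x
    proof -
      have "\<bar>b x\<bar> \<le> \<bar>B\<bar>" using assms(3)[OF that] by simp
      then have "(b x)^2 \<le> B^2" by (simp add: abs_le_square_iff)
      then show ?thesis by (simp add: power_mult_distrib mult_right_mono)
    qed
    then show "AE x in lebesgue_on I. norm ((b x * f x)^2) \<le> norm (B^2 * (f x)^2)"
      using assms(1) by (intro AE_I2) simp
  qed
  moreover have "(\<lambda>x. b x * f x) \<in> borel_measurable (lebesgue_on I)"
    using assms by (simp add: L2_on_iff borel_measurable_times)
  ultimately show ?thesis using assms(1) by (simp add: L2_on_iff)
qed

lemma L2_on_bounded:
  assumes "I \<in> lmeasurable" "b \<in> borel_measurable (lebesgue_on I)" "\<And>x. x \<in> I \<Longrightarrow> \<bar>b x\<bar> \<le> B"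
  shows "L2_on I b"
proof -
  interpret finite_measure "lebesgue_on I" using finite_measure_lebesgue_on[OF assms(1)] .
  have "L2_on I (\<lambda>_. 1)"
    using assms(1) by (simp add: L2_on_iff fmeasurable_def)
  from L2_on_mult_bounded[OF _ assms(2,3) this] show ?thesis
    using assms(1) by simp
qed

lemma L2_on_integrable:
  assumes "I \<in> lmeasurable" "L2_on I g"
  shows "integrable (lebesgue_on I) g"
  using L2_on_mult_integrable[OF _ assms(2) L2_on_bounded[OF assms(1), of "\<lambda>_. 1" 1]] assms(1) by simp

lemma deriv_tower_bounded_on:
  assumes "deriv_tower UNIV A" "bounded I"
  shows "\<exists>B. \<forall>x\<in>I. \<bar>A k x\<bar> \<le> B"
proof -
  have "continuous_on (closure I) (A k)"
    using continuous_on_subset[OF deriv_tower_continuous_on[OF assms(1)]] by blast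
  moreover have "compact (closure I)"
    using assms(2) by (simp add: compact_closure)
  ultimately obtain B where "\<And>x. x \<in> closure I \<Longrightarrow> norm (A k x) \<le> B"
    using continuous_on_compact_bound by metis
  then show ?thesis
    using closure_subset by (intro exI[of _ B]) auto
qed

lemma deriv_tower_measurable:
  assumes "deriv_tower UNIV A" "I \<in> sets lebesgue"
  shows "A k \<in> borel_measurable (lebesgue_on I)"
proof -
  have "continuous_on I (A k)"
    using continuous_on_subset[OF deriv_tower_continuous_on[OF assms(1)]] by blast
  then show ?thesis using assms(2) by (rule continuous_imp_measurable_on_sets_lebesgue)
qed

lemma L2_on_deriv_tower_mult:
  assumes "open I" "bounded I" "deriv_tower UNIV A" "L2_on I f"
  shows "L2_on I (\<lambda>x. A k x * f x)"
proof -
  have I: "I \<in> sets lebesgue" using assms(1) by simp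
  obtain B where "\<forall>x\<in>I. \<bar>A k x\<bar> \<le> B" using deriv_tower_bounded_on[OF assms(3,2)] ..
  then show ?thesis
    by (intro L2_on_mult_bounded[OF I deriv_tower_measurable[OF assms(3) I]] assms(4)) auto
qed

lemma test_funI:
  assumes "\<And>k x. x \<in> I \<Longrightarrow> (deriv ^^ k) f differentiable (at x)"
    and "compact K" "K \<subseteq> I" "\<And>x. x \<in> I \<Longrightarrow> f x \<noteq> 0 \<Longrightarrow> x \<in> K"
  shows "test_fun I f"
proof -
  let ?S = "closure {x\<in>I. f x \<noteq> 0}"
  have "?S \<subseteq> K"
    using assms(2,4) by (intro closure_minimal) (auto intro: compact_imp_closed)
  moreover have "compact (K \<inter> ?S)"
    using assms(2) by (intro compact_Int_closed) auto
  moreover have "K \<inter> ?S = ?S"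
    using \<open>?S \<subseteq> K\<close> by blast
  ultimately show ?thesis
    using assms(1,3) unfolding test_fun_def by auto
qed

lemma test_fun_support:
  assumes "test_fun I f"
  obtains K where "compact K" "K \<subseteq> I" "\<forall>x\<in>I - K. f x = 0"
proof (rule that)
  show "compact (closure {x\<in>I. f x \<noteq> 0})" "closure {x\<in>I. f x \<noteq> 0} \<subseteq> I"
    using assms unfolding test_fun_def by simp_all
  show "\<forall>x\<in>I - closure {x\<in>I. f x \<noteq> 0}. f x = 0"
    using closure_subset[of "{x\<in>I. f x \<noteq> 0}"] by blast
qed

lemma deriv_tower_test_fun: "test_fun I f \<Longrightarrow> deriv_tower I (\<lambda>k. (deriv ^^ k) f)"
  unfolding deriv_tower_def test_fun_def
  by (simp add: DERIV_deriv_iff_real_differentiable[symmetric])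

lemma funpow_deriv_Suc: "(deriv ^^ k) (deriv f) = (deriv ^^ Suc k) f"
  by (metis comp_apply funpow_Suc_right)

lemma test_fun_deriv:
  assumes "open I" "test_fun I f"
  shows "test_fun I (deriv f)"
proof -
  obtain K where K: "compact K" "K \<subseteq> I" "\<forall>x\<in>I - K. f x = 0"
    using test_fun_support[OF assms(2)] .
  show ?thesis
  proof (rule test_funI[OF _ K(1,2)])
    show "(deriv ^^ k) (deriv f) differentiable (at x)" if "x \<in> I" for k x
      using assms(2) that unfolding test_fun_def funpow_deriv_Suc by blast
    show "x \<in> K" if "x \<in> I" "deriv f x \<noteq> 0" for x
    proof (rule ccontr)
      assume "x \<notin> K"
      have "(f has_real_derivative 0) (at x)"
        by (rule has_field_derivative_transform_within_open[of "\<lambda>_. 0" 0 x "I - K"])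
           (use assms(1) K that \<open>x \<notin> K\<close> in \<open>auto intro: compact_imp_closed\<close>)
      then show False using that(2) DERIV_imp_deriv by blast
    qed
  qed
qed

lemma test_fun_mult:
  assumes "open I" "deriv_tower I A" "test_fun I f"
  shows "test_fun I (\<lambda>x. A 0 x * f x)"
proof -
  obtain K where K: "compact K" "K \<subseteq> I" "\<forall>x\<in>I - K. f x = 0"
    using test_fun_support[OF assms(3)] .
  have tower: "deriv_tower I (leibniz_prod A (\<lambda>k. (deriv ^^ k) f))"
    by (intro deriv_tower_leibniz_prod assms(2) deriv_tower_test_fun assms(3))
  have prod: "leibniz_prod A (\<lambda>k. (deriv ^^ k) f) 0 = (\<lambda>x. A 0 x * f x)"
    by (simp add: fun_eq_iff)
  show ?thesis
  proof (rule test_funI[OF _ K(1,2)])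
    show "(deriv ^^ k) (\<lambda>x. A 0 x * f x) differentiable (at x)" if "x \<in> I" for k x
      using deriv_tower_differentiable[OF assms(1) tower that] unfolding prod .
    show "x \<in> K" if "x \<in> I" "A 0 x * f x \<noteq> 0" for x
      using K(3) that by auto
  qed
qed

lemma test_fun_continuous_on:
  assumes "test_fun I f"
  shows "continuous_on I f"
proof (rule continuous_at_imp_continuous_on, rule ballI)
  fix x assume "x \<in> I"
  then have "(deriv ^^ 0) f differentiable (at x)"
    using assms unfolding test_fun_def by blast
  then show "isCont f x" by (simp add: differentiable_imp_continuous_within)
qed

lemma test_fun_bounded:
  assumes "test_fun I f"
  obtains B where "\<forall>x\<in>I. \<bar>f x\<bar> \<le> B"
proof -
  obtain K where K: "compact K" "K \<subseteq> I" "\<forall>x\<in>I - K. f x = 0"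
    using test_fun_support[OF assms] .
  obtain B where B: "\<And>x. x \<in> K \<Longrightarrow> norm (f x) \<le> B"
    using continuous_on_compact_bound[OF K(1) continuous_on_subset[OF test_fun_continuous_on[OF assms] K(2)]]
    by metis
  show ?thesis
  proof (rule that)
    show "\<forall>x\<in>I. \<bar>f x\<bar> \<le> max B 0"
      using B K(3) by force
  qed
qed

lemma test_fun_L2_on:
  assumes "open I" "bounded I" "test_fun I f"
  shows "L2_on I f"
proof -
  obtain B where B: "\<forall>x\<in>I. \<bar>f x\<bar> \<le> B"
    using test_fun_bounded[OF assms(3)] .
  have "f \<in> borel_measurable (lebesgue_on I)"
    using assms(1) by (intro continuous_imp_measurable_on_sets_lebesgue test_fun_continuous_on assms(3)) auto
  moreover have "I \<in> lmeasurable"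
    using assms(1,2) by (simp add: bounded_set_imp_lmeasurable)
  ultimately show ?thesis
    using B by (intro L2_on_bounded) auto
qed

section \<open>Weak derivatives\<close>

lemma weak_deriv_of_iff:
  assumes "I \<in> sets lebesgue"
  shows "weak_deriv_of I k f g \<longleftrightarrow>
     (\<forall>\<psi>. test_fun I \<psi> \<longrightarrow>
        integrable (lebesgue_on I) (\<lambda>x. f x * (deriv ^^ k) \<psi> x) \<and>
        integrable (lebesgue_on I) (\<lambda>x. g x * \<psi> x) \<and>
        integral\<^sup>L (lebesgue_on I) (\<lambda>x. f x * (deriv ^^ k) \<psi> x)
          = (-1)^k * integral\<^sup>L (lebesgue_on I) (\<lambda>x. g x * \<psi> x))"
proof -
  have "I \<inter> space lebesgue \<in> sets lebesgue" using assms by simp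
  show ?thesis
    unfolding weak_deriv_of_def set_integrable_eq[OF \<open>I \<inter> space lebesgue \<in> sets lebesgue\<close>]
      set_integral_lebesgue_on[OF assms] ..
qed

lemma weak_deriv_ofI:
  assumes "I \<in> sets lebesgue"
    and "\<And>\<psi>. test_fun I \<psi> \<Longrightarrow>
      integrable (lebesgue_on I) (\<lambda>x. f x * (deriv ^^ k) \<psi> x) \<and>
      integrable (lebesgue_on I) (\<lambda>x. g x * \<psi> x) \<and>
      integral\<^sup>L (lebesgue_on I) (\<lambda>x. f x * (deriv ^^ k) \<psi> x)
        = (-1)^k * integral\<^sup>L (lebesgue_on I) (\<lambda>x. g x * \<psi> x)"
  shows "weak_deriv_of I k f g"
  using assms unfolding weak_deriv_of_iff[OF assms(1)] by blast

lemma weak_deriv_ofD: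
  assumes "I \<in> sets lebesgue" "weak_deriv_of I k f g" "test_fun I \<psi>"
  shows "integrable (lebesgue_on I) (\<lambda>x. f x * (deriv ^^ k) \<psi> x)"
    and "integrable (lebesgue_on I) (\<lambda>x. g x * \<psi> x)"
    and "integral\<^sup>L (lebesgue_on I) (\<lambda>x. f x * (deriv ^^ k) \<psi> x)
           = (-1)^k * integral\<^sup>L (lebesgue_on I) (\<lambda>x. g x * \<psi> x)"
  using assms(2,3) unfolding weak_deriv_of_iff[OF assms(1)] by blast+

lemma weak_deriv_of_0:
  assumes "open I" "bounded I" "L2_on I f"
  shows "weak_deriv_of I 0 f f"
proof (rule weak_deriv_ofI)
  fix \<psi> assume "test_fun I \<psi>"
  then have "integrable (lebesgue_on I) (\<lambda>x. f x * \<psi> x)"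
    using assms by (intro L2_on_mult_integrable[OF _ assms(3) test_fun_L2_on]) auto
  then show "integrable (lebesgue_on I) (\<lambda>x. f x * (deriv ^^ 0) \<psi> x) \<and>
      integrable (lebesgue_on I) (\<lambda>x. f x * \<psi> x) \<and>
      integral\<^sup>L (lebesgue_on I) (\<lambda>x. f x * (deriv ^^ 0) \<psi> x)
        = (-1)^0 * integral\<^sup>L (lebesgue_on I) (\<lambda>x. f x * \<psi> x)"
    by simp
qed (use assms(1) in simp)

lemma weak_deriv_of_consecutive:
  assumes "open I" "weak_deriv_of I k f g" "weak_deriv_of I (Suc k) f g'"
  shows "weak_deriv_of I 1 g g'"
proof (rule weak_deriv_ofI)
  show I: "I \<in> sets lebesgue" using assms(1) by simp
  fix \<psi> assume \<psi>: "test_fun I \<psi>"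
  have d\<psi>: "test_fun I (deriv \<psi>)" by (rule test_fun_deriv[OF assms(1) \<psi>])
  have "integral\<^sup>L (lebesgue_on I) (\<lambda>x. f x * (deriv ^^ Suc k) \<psi> x)
      = (-1)^k * integral\<^sup>L (lebesgue_on I) (\<lambda>x. g x * deriv \<psi> x)"
    using weak_deriv_ofD(3)[OF I assms(2) d\<psi>] by (simp add: funpow_deriv_Suc)
  moreover have "integral\<^sup>L (lebesgue_on I) (\<lambda>x. f x * (deriv ^^ Suc k) \<psi> x)
      = (-1)^Suc k * integral\<^sup>L (lebesgue_on I) (\<lambda>x. g' x * \<psi> x)"
    by (rule weak_deriv_ofD(3)[OF I assms(3) \<psi>])
  ultimately have "(-1)^k * integral\<^sup>L (lebesgue_on I) (\<lambda>x. g x * deriv \<psi> x)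
      = (-1)^k * (- integral\<^sup>L (lebesgue_on I) (\<lambda>x. g' x * \<psi> x))"
    by simp
  moreover have "(-1::real)^k \<noteq> 0" by simp
  ultimately have "integral\<^sup>L (lebesgue_on I) (\<lambda>x. g x * deriv \<psi> x) = - integral\<^sup>L (lebesgue_on I) (\<lambda>x. g' x * \<psi> x)"
    using mult_left_cancel by blast
  then show "integrable (lebesgue_on I) (\<lambda>x. g x * (deriv ^^ 1) \<psi> x) \<and>
      integrable (lebesgue_on I) (\<lambda>x. g' x * \<psi> x) \<and>
      integral\<^sup>L (lebesgue_on I) (\<lambda>x. g x * (deriv ^^ 1) \<psi> x)
        = (-1)^1 * integral\<^sup>L (lebesgue_on I) (\<lambda>x. g' x * \<psi> x)"
    using weak_deriv_ofD(2)[OF I assms(2) d\<psi>] weak_deriv_ofD(2)[OF I assms(3) \<psi>] by simp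
qed

lemma weak_deriv_of_iterate:
  assumes "open I" "bounded I" "L2_on I (h 0)" "\<And>l. l < k \<Longrightarrow> weak_deriv_of I 1 (h l) (h (Suc l))"
  shows "weak_deriv_of I k (h 0) (h k)"
  using assms(4)
proof (induction k)
  case 0
  show ?case using weak_deriv_of_0[OF assms(1-3)] .
next
  case (Suc k)
  have IH: "weak_deriv_of I k (h 0) (h k)" using Suc by simp
  have step: "weak_deriv_of I 1 (h k) (h (Suc k))" using Suc.prems by simp
  show ?case
  proof (rule weak_deriv_ofI)
    show I: "I \<in> sets lebesgue" using assms(1) by simp
    fix \<psi> assume \<psi>: "test_fun I \<psi>"
    have d\<psi>: "test_fun I (deriv \<psi>)" by (rule test_fun_deriv[OF assms(1) \<psi>])
    have "integral\<^sup>L (lebesgue_on I) (\<lambda>x. h 0 x * (deriv ^^ Suc k) \<psi> x)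
        = (-1)^k * integral\<^sup>L (lebesgue_on I) (\<lambda>x. h k x * deriv \<psi> x)"
      using weak_deriv_ofD(3)[OF I IH d\<psi>] by (simp add: funpow_deriv_Suc)
    moreover have "integral\<^sup>L (lebesgue_on I) (\<lambda>x. h k x * deriv \<psi> x)
        = - integral\<^sup>L (lebesgue_on I) (\<lambda>x. h (Suc k) x * \<psi> x)"
      using weak_deriv_ofD(3)[OF I step \<psi>] by simp
    ultimately show "integrable (lebesgue_on I) (\<lambda>x. h 0 x * (deriv ^^ Suc k) \<psi> x) \<and>
        integrable (lebesgue_on I) (\<lambda>x. h (Suc k) x * \<psi> x) \<and>
        integral\<^sup>L (lebesgue_on I) (\<lambda>x. h 0 x * (deriv ^^ Suc k) \<psi> x)
          = (-1)^Suc k * integral\<^sup>L (lebesgue_on I) (\<lambda>x. h (Suc k) x * \<psi> x)"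
      using weak_deriv_ofD(1)[OF I IH d\<psi>] weak_deriv_ofD(2)[OF I step \<psi>]
      by (simp add: funpow_deriv_Suc)
  qed
qed

lemma weak_deriv_of_add:
  assumes "I \<in> sets lebesgue" "weak_deriv_of I k f g" "weak_deriv_of I k f' g'"
  shows "weak_deriv_of I k (\<lambda>x. f x + f' x) (\<lambda>x. g x + g' x)"
  using assms(2,3) unfolding weak_deriv_of_iff[OF assms(1)] distrib_right
  by (simp add: Bochner_Integration.integral_add algebra_simps)

lemma weak_deriv_of_cmult:
  assumes "I \<in> sets lebesgue" "weak_deriv_of I k f g"
  shows "weak_deriv_of I k (\<lambda>x. c * f x) (\<lambda>x. c * g x)"
  using assms(2) unfolding weak_deriv_of_iff[OF assms(1)] mult.assoc by simp

lemma weak_deriv_of_sum: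
  assumes "I \<in> sets lebesgue" "finite S" "\<And>i. i \<in> S \<Longrightarrow> weak_deriv_of I k (f i) (g i)"
  shows "weak_deriv_of I k (\<lambda>x. \<Sum>i\<in>S. f i x) (\<lambda>x. \<Sum>i\<in>S. g i x)"
  using assms(2,3)
proof (induction S rule: finite_induct)
  case empty
  then show ?case using assms(1) by (simp add: weak_deriv_of_iff)
next
  case (insert a S)
  then show ?case using weak_deriv_of_add[OF assms(1)] by simp
qed

lemma deriv_mult_test_fun:
  assumes "deriv_tower UNIV A" "test_fun I f" "x \<in> I"
  shows "deriv (\<lambda>x. A 0 x * f x) x = A 1 x * f x + A 0 x * deriv f x"
proof (rule DERIV_imp_deriv)
  have "(A 0 has_real_derivative A 1 x) (at x)"
    using assms(1) unfolding deriv_tower_def by auto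
  moreover have "((deriv ^^ 0) f has_real_derivative (deriv ^^ Suc 0) f x) (at x)"
    using deriv_tower_test_fun[OF assms(2)] assms(3) unfolding deriv_tower_def by blast
  then have "(f has_real_derivative deriv f x) (at x)" by simp
  ultimately show "((\<lambda>x. A 0 x * f x) has_real_derivative A 1 x * f x + A 0 x * deriv f x) (at x)"
    by (rule DERIV_mult[THEN DERIV_cong]) (simp add: algebra_simps)
qed

text \<open>Test the weak derivative of \<open>h\<close> against \<open>A 0 * \<psi>\<close>.\<close>

lemma weak_deriv_of_mult:
  assumes "open I" "bounded I" "deriv_tower UNIV A"
    and "weak_deriv_of I 1 h h'" "L2_on I h" "L2_on I h'"
  shows "weak_deriv_of I 1 (\<lambda>x. A 0 x * h x) (\<lambda>x. A 1 x * h x + A 0 x * h' x)"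
proof -
  have I: "I \<in> sets lebesgue" using assms(1) by simp
  let ?\<mu> = "lebesgue_on I"
  have "integrable ?\<mu> (\<lambda>x. A 0 x * h x * deriv \<psi> x) \<and>
        integrable ?\<mu> (\<lambda>x. (A 1 x * h x + A 0 x * h' x) * \<psi> x) \<and>
        integral\<^sup>L ?\<mu> (\<lambda>x. A 0 x * h x * deriv \<psi> x)
          = - integral\<^sup>L ?\<mu> (\<lambda>x. (A 1 x * h x + A 0 x * h' x) * \<psi> x)"
    if \<psi>: "test_fun I \<psi>" for \<psi>
  proof -
    have L2: "L2_on I \<psi>" "L2_on I (deriv \<psi>)"
      using assms(1,2) \<psi> by (auto intro: test_fun_L2_on test_fun_deriv)
    have L2A: "L2_on I (\<lambda>x. A 0 x * h x)" "L2_on I (\<lambda>x. A 1 x * h x)" "L2_on I (\<lambda>x. A 0 x * h' x)"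
      using assms by (auto intro: L2_on_deriv_tower_mult)
    have i1: "integrable ?\<mu> (\<lambda>x. A 0 x * h x * deriv \<psi> x)"
      and i2: "integrable ?\<mu> (\<lambda>x. A 1 x * h x * \<psi> x)"
      and i3: "integrable ?\<mu> (\<lambda>x. A 0 x * h' x * \<psi> x)"
      using L2 L2A by (auto intro: L2_on_mult_integrable[OF I])
    have "test_fun I (\<lambda>x. A 0 x * \<psi> x)"
      by (rule test_fun_mult[OF assms(1) deriv_tower_subset[OF assms(3)] \<psi>]) simp
    then have "integral\<^sup>L ?\<mu> (\<lambda>x. h x * deriv (\<lambda>x. A 0 x * \<psi> x) x)
        = - integral\<^sup>L ?\<mu> (\<lambda>x. h' x * (A 0 x * \<psi> x))"
      using assms(4) unfolding weak_deriv_of_iff[OF I] by auto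
    moreover have "integral\<^sup>L ?\<mu> (\<lambda>x. h x * deriv (\<lambda>x. A 0 x * \<psi> x) x)
        = integral\<^sup>L ?\<mu> (\<lambda>x. A 1 x * h x * \<psi> x) + integral\<^sup>L ?\<mu> (\<lambda>x. A 0 x * h x * deriv \<psi> x)"
    proof -
      have "integral\<^sup>L ?\<mu> (\<lambda>x. h x * deriv (\<lambda>x. A 0 x * \<psi> x) x)
          = integral\<^sup>L ?\<mu> (\<lambda>x. A 1 x * h x * \<psi> x + A 0 x * h x * deriv \<psi> x)"
        using I deriv_mult_test_fun[OF assms(3) \<psi>]
        by (intro Bochner_Integration.integral_cong) (simp_all add: algebra_simps)
      then show ?thesis using i1 i2 by simp
    qed
    moreover have "integral\<^sup>L ?\<mu> (\<lambda>x. (A 1 x * h x + A 0 x * h' x) * \<psi> x)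
        = integral\<^sup>L ?\<mu> (\<lambda>x. A 1 x * h x * \<psi> x) + integral\<^sup>L ?\<mu> (\<lambda>x. A 0 x * h' x * \<psi> x)"
      using i2 i3 by (simp add: distrib_right)
    ultimately show ?thesis
      using i1 i2 i3 by (simp add: distrib_right mult.assoc mult.left_commute)
  qed
  then show ?thesis unfolding weak_deriv_of_iff[OF I] by simp
qed

lemma L2_on_leibniz_prod:
  assumes "open I" "bounded I" "deriv_tower UNIV A" "\<And>l. l \<le> m \<Longrightarrow> L2_on I (g l)" "k \<le> m"
  shows "L2_on I (leibniz_prod A g k)"
proof -
  have "L2_on I (\<lambda>x. \<Sum>i\<le>k. real (k choose i) * (A i x * g (k - i) x))"
    using assms by (intro L2_on_sum L2_on_cmult L2_on_deriv_tower_mult) auto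
  then show ?thesis by (simp add: leibniz_prod_def[abs_def])
qed

lemma weak_deriv_of_leibniz_prod_Suc:
  assumes "open I" "bounded I" "deriv_tower UNIV A"
    and "\<And>l. l \<le> m \<Longrightarrow> L2_on I (g l)" "\<And>l. l < m \<Longrightarrow> weak_deriv_of I 1 (g l) (g (Suc l))"
    and "k < m"
  shows "weak_deriv_of I 1 (leibniz_prod A g k) (leibniz_prod A g (Suc k))"
proof -
  have I: "I \<in> sets lebesgue" using assms(1) by simp
  have "weak_deriv_of I 1 (\<lambda>x. A (0 + i) x * g (k - i) x)
      (\<lambda>x. A (1 + i) x * g (k - i) x + A (0 + i) x * g (Suc (k - i)) x)" if "i \<le> k" for i
    using that assms
    by (intro weak_deriv_of_mult[of I "\<lambda>j. A (j + i)"] deriv_tower_shift) auto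
  then have "weak_deriv_of I 1 (\<lambda>x. \<Sum>i\<le>k. real (k choose i) * (A i x * g (k - i) x))
      (\<lambda>x. \<Sum>i\<le>k. real (k choose i) * (A (Suc i) x * g (k - i) x + A i x * g (Suc (k - i)) x))"
    by (intro weak_deriv_of_sum[OF I] weak_deriv_of_cmult[OF I]) auto
  then show ?thesis
    unfolding leibniz_prod_Suc by (simp add: leibniz_prod_def[abs_def])
qed

text \<open>Order \<open>0\<close> is \<open>\<phi>\<close> itself rather than the almost everywhere equal function chosen by
  \<^const>\<open>weak_deriv\<close>.\<close>

definition weak_derivs :: "real set \<Rightarrow> (real \<Rightarrow> real) \<Rightarrow> nat \<Rightarrow> real \<Rightarrow> real" where
  "weak_derivs I \<phi> l = (if l = 0 then \<phi> else weak_deriv I l \<phi>)"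

lemma in_Hm_weak_derivs:
  assumes "open I" "bounded I" "in_Hm I m \<phi>" "l \<le> m"
  shows "L2_on I (weak_derivs I \<phi> l) \<and> weak_deriv_of I l \<phi> (weak_derivs I \<phi> l)"
proof (cases "l = 0")
  case True
  have "L2_on I \<phi>" using assms(3) unfolding in_Hm_def by blast
  then show ?thesis using True weak_deriv_of_0[OF assms(1,2)] by (simp add: weak_derivs_def)
next
  case False
  have "\<exists>g. L2_on I g \<and> weak_deriv_of I l \<phi> g" using assms(3,4) unfolding in_Hm_def by blast
  then have "L2_on I (weak_deriv I l \<phi>) \<and> weak_deriv_of I l \<phi> (weak_deriv I l \<phi>)"
    unfolding weak_deriv_def by (rule someI_ex)
  then show ?thesis using False by (simp add: weak_derivs_def)
qed

lemma weak_deriv_of_leibniz_rule: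
  assumes "open I" "bounded I" "deriv_tower UNIV A" "in_Hm I m \<phi>" "k \<le> m"
  shows "L2_on I (leibniz_prod A (weak_derivs I \<phi>) k) \<and>
    weak_deriv_of I k (\<lambda>x. A 0 x * \<phi> x) (leibniz_prod A (weak_derivs I \<phi>) k)"
proof -
  let ?g = "weak_derivs I \<phi>"
  have L2: "L2_on I (?g l)" if "l \<le> m" for l
    using in_Hm_weak_derivs[OF assms(1,2,4) that] by blast
  have W: "weak_deriv_of I 1 (?g l) (?g (Suc l))" if "l < m" for l
    using in_Hm_weak_derivs[OF assms(1,2,4)] that weak_deriv_of_consecutive[OF assms(1)]
    by (meson Suc_leI less_imp_le_nat)
  have prod_L2: "L2_on I (leibniz_prod A ?g j)" if "j \<le> m" for j
    using that by (auto intro: L2_on_leibniz_prod[OF assms(1-3)] L2)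
  have "weak_deriv_of I k (leibniz_prod A ?g 0) (leibniz_prod A ?g k)"
  proof (rule weak_deriv_of_iterate[of I "leibniz_prod A ?g", OF assms(1,2) prod_L2[OF le0]])
    show "weak_deriv_of I 1 (leibniz_prod A ?g l) (leibniz_prod A ?g (Suc l))" if "l < k" for l
    proof (rule weak_deriv_of_leibniz_prod_Suc[OF assms(1-3)])
      show "L2_on I (?g j)" if "j \<le> m" for j using L2[OF that] .
      show "weak_deriv_of I 1 (?g j) (?g (Suc j))" if "j < m" for j using W[OF that] .
      show "l < m" using that assms(5) by simp
    qed
  qed
  moreover have "leibniz_prod A ?g 0 = (\<lambda>x. A 0 x * \<phi> x)"
    by (simp add: weak_derivs_def fun_eq_iff)
  ultimately show ?thesis
    using prod_L2[OF assms(5)] by simp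
qed

lemma in_Hm_mult:
  assumes "open I" "bounded I" "deriv_tower UNIV A" "in_Hm I m \<phi>"
  shows "in_Hm I m (\<lambda>x. A 0 x * \<phi> x)"
proof -
  have "L2_on I (\<lambda>x. A 0 x * \<phi> x)"
    using assms by (intro L2_on_deriv_tower_mult) (auto simp: in_Hm_def)
  then show ?thesis
    using weak_deriv_of_leibniz_rule[OF assms] unfolding in_Hm_def by blast
qed

section \<open>Uniqueness of weak derivatives\<close>

lemma ennreal_eq_ennreal_uminus_iff: "ennreal y = ennreal (- y) \<longleftrightarrow> y = 0"
  by (cases "y \<le> 0") (auto simp: ennreal_eq_0_iff ennreal_neg)

text \<open>The positive and negative parts of \<open>H\<close> are densities of two finite measures that agree
  on all rays \<open>{c<..}\<close>, hence coincide.\<close>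

lemma AE_lborel_eq_0_if_integral_greaterThan_eq_0:
  fixes H :: "real \<Rightarrow> real"
  assumes "integrable lborel H" "\<And>c. integral\<^sup>L lborel (\<lambda>x. H x * indicator {c<..} x) = 0"
  shows "AE x in lborel. H x = 0"
proof -
  have [measurable]: "H \<in> borel_measurable lborel"
    using assms(1) by (rule borel_measurable_integrable)
  define M1 where "M1 = density lborel (\<lambda>x. ennreal (H x))"
  define M2 where "M2 = density lborel (\<lambda>x. ennreal (- H x))"
  have rays: "emeasure M1 {c<..} = emeasure M2 {c<..} \<and> emeasure M1 {c<..} < \<infinity>" for c
  proof -
    have "emeasure M1 {c<..} = (\<integral>\<^sup>+x. ennreal (H x * indicator {c<..} x) \<partial>lborel)"
      unfolding M1_def by (subst emeasure_density) (auto intro!: nn_integral_cong split: split_indicator)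
    moreover have "emeasure M2 {c<..} = (\<integral>\<^sup>+x. ennreal (- (H x * indicator {c<..} x)) \<partial>lborel)"
      unfolding M2_def by (subst emeasure_density) (auto intro!: nn_integral_cong split: split_indicator)
    moreover have "integrable lborel (\<lambda>x. H x * indicator {c<..} x)"
      by (rule integrable_real_mult_indicator) (simp_all add: assms(1))
    then obtain r q where "0 \<le> r" "0 \<le> q"
      "(\<integral>\<^sup>+x. ennreal (H x * indicator {c<..} x) \<partial>lborel) = ennreal r"
      "(\<integral>\<^sup>+x. ennreal (- (H x * indicator {c<..} x)) \<partial>lborel) = ennreal q"
      "integral\<^sup>L lborel (\<lambda>x. H x * indicator {c<..} x) = r - q"
      by (rule integrableE)
    ultimately show ?thesis using assms(2)[of c] by simp
  qed
  have "sets M1 = sets borel" "sets M2 = sets borel"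
    by (simp_all add: M1_def M2_def)
  moreover have "emeasure M1 {x<..} < \<infinity>" "emeasure M2 {x<..} < \<infinity>" for x
    using rays[of x] by auto
  ultimately have "M1 = M2"
    using rays by (intro measure_eqI_lessThan) auto
  then have densities: "density lborel (\<lambda>x. ennreal (H x)) = density lborel (\<lambda>x. ennreal (- H x))"
    unfolding M1_def M2_def .
  have "AE x in lborel. ennreal (H x) = ennreal (- H x)"
    by (rule sigma_finite_measure.density_unique[OF sigma_finite_lborel _ _ densities]; measurable)
  then show ?thesis
    by eventually_elim (simp add: ennreal_eq_ennreal_uminus_iff)
qed

lemma AE_eq_0_if_integral_greaterThan_eq_0:
  fixes H :: "real \<Rightarrow> real"
  assumes "integrable lebesgue H" "\<And>c. integral\<^sup>L lebesgue (\<lambda>x. H x * indicator {c<..} x) = 0"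
  shows "AE x in lebesgue. H x = 0"
proof -
  obtain H' where H'_borel [measurable]: "H' \<in> borel_measurable lborel" and HH': "AE x in lborel. H x = H' x"
    using completion_ex_borel_measurable_real borel_measurable_integrable[OF assms(1)] by blast
  have HH'_lebesgue: "AE x in lebesgue. H x = H' x" using HH' by (rule AE_completion)
  have "integrable lebesgue H'"
    by (rule integrable_cong_AE_imp[OF assms(1) measurable_completion[OF H'_borel] HH'_lebesgue])
  then have "integrable lborel H'"
    using integrable_completion[of H' lborel] by simp
  moreover have "integral\<^sup>L lborel (\<lambda>x. H' x * indicator {c<..} x) = 0" for c
  proof -
    have ind: "(indicator {c<..} :: real \<Rightarrow> real) \<in> borel_measurable lebesgue"
      by (rule measurable_completion) measurable
    have "integral\<^sup>L lebesgue (\<lambda>x. H x * indicator {c<..} x) = integral\<^sup>L lebesgue (\<lambda>x. H' x * indicator {c<..} x)"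
    proof (rule integral_cong_AE)
      show "(\<lambda>x. H x * indicator {c<..} x) \<in> borel_measurable lebesgue"
        using borel_measurable_integrable[OF assms(1)] ind by (rule borel_measurable_times)
      show "(\<lambda>x. H' x * indicator {c<..} x) \<in> borel_measurable lebesgue"
        using measurable_completion[OF H'_borel] ind by (rule borel_measurable_times)
      show "AE x in lebesgue. H x * indicator {c<..} x = H' x * indicator {c<..} x"
        using HH'_lebesgue by eventually_elim simp
    qed
    also have "\<dots> = integral\<^sup>L lborel (\<lambda>x. H' x * indicator {c<..} x)"
      by (rule integral_completion) measurable
    finally show ?thesis using assms(2) by simp
  qed
  ultimately have "AE x in lborel. H' x = 0"
    by (rule AE_lborel_eq_0_if_integral_greaterThan_eq_0)
  then have "AE x in lborel. H x = 0"
    using HH' by eventually_elim simp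
  then show ?thesis by (rule AE_completion)
qed

definition cutoff :: "real \<Rightarrow> real \<Rightarrow> nat \<Rightarrow> nat \<Rightarrow> real \<Rightarrow> real" where
  "cutoff c d n = leibniz_prod
     (affine_tower 1 (real (Suc n)) (- real (Suc n) * c - 1) smooth_step_tower)
     (affine_tower 1 (- real (Suc n)) (real (Suc n) * d - 1) smooth_step_tower)"

lemma cutoff_0:
  "cutoff c d n 0 x = smooth_step (real (Suc n) * (x - c) - 1) * smooth_step (real (Suc n) * (d - x) - 1)"
  by (simp add: cutoff_def affine_tower_def smooth_step_tower_def algebra_simps)

lemma deriv_tower_cutoff: "deriv_tower UNIV (cutoff c d n)"
  unfolding cutoff_def by (intro deriv_tower_leibniz_prod deriv_tower_affine deriv_tower_smooth_step)

lemma test_fun_cutoff: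
  assumes "a \<le> c" "d \<le> b"
  shows "test_fun {a<..<b} (cutoff c d n 0)"
proof (rule test_funI)
  let ?s = "real (Suc n)"
  show "(deriv ^^ k) (cutoff c d n 0) differentiable (at x)" for k x
    by (rule deriv_tower_differentiable[OF open_UNIV deriv_tower_cutoff]) simp
  show "compact {c + 1 / ?s .. d - 1 / ?s}" by simp
  show "{c + 1 / ?s .. d - 1 / ?s} \<subseteq> {a<..<b}"
  proof
    fix x assume "x \<in> {c + 1 / ?s .. d - 1 / ?s}"
    moreover have "0 < 1 / ?s" by simp
    ultimately show "x \<in> {a<..<b}"
      using assms by (simp only: atLeastAtMost_iff greaterThanLessThan_iff) linarith
  qed
  show "x \<in> {c + 1 / ?s .. d - 1 / ?s}" if "cutoff c d n 0 x \<noteq> 0" for x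
  proof -
    have "smooth_step (?s * (x - c) - 1) \<noteq> 0" "smooth_step (?s * (d - x) - 1) \<noteq> 0"
      using that by (auto simp: cutoff_0)
    then have "?s * (x - c) - 1 > 0" "?s * (d - x) - 1 > 0"
      using smooth_step_eq_0 by (metis not_le)+
    then show ?thesis by (simp add: field_simps)
  qed
qed

lemma abs_cutoff_le_1: "\<bar>cutoff c d n 0 x\<bar> \<le> 1"
  using smooth_step_bounds[of "real (Suc n) * (x - c) - 1"] smooth_step_bounds[of "real (Suc n) * (d - x) - 1"]
  by (simp add: cutoff_0 abs_mult mult_le_one)

lemma cutoff_tendsto_indicator: "(\<lambda>n. cutoff c d n 0 x) \<longlonglongrightarrow> indicator {c<..<d} x"
proof (cases "c < x \<and> x < d")
  case True
  obtain N :: nat where N: "real N > 2 / (x - c) + 2 / (d - x)"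
    using reals_Archimedean2 by blast
  have "cutoff c d n 0 x = 1" if "N \<le> n" for n
  proof -
    have "real (Suc n) > 2 / (x - c)" "real (Suc n) > 2 / (d - x)"
      using N that True by (smt (verit, best) divide_pos_pos of_nat_Suc of_nat_mono)+
    then have "real (Suc n) * (x - c) - 1 \<ge> 1" "real (Suc n) * (d - x) - 1 \<ge> 1"
      using True by (simp_all add: field_simps)
    then show ?thesis by (simp add: cutoff_0 smooth_step_eq_1)
  qed
  then have "(\<lambda>n. cutoff c d n 0 x) \<longlonglongrightarrow> 1"
    by (intro tendsto_eventually eventually_sequentiallyI[of N]) simp
  then show ?thesis using True by simp
next
  case False
  then have "x - c \<le> 0 \<or> d - x \<le> 0" by auto
  then have outside: "real (Suc n) * (x - c) - 1 \<le> 0 \<or> real (Suc n) * (d - x) - 1 \<le> 0" for n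
    by (smt (verit) mult_nonneg_nonpos of_nat_0_le_iff)
  have "cutoff c d n 0 x = 0" for n
  proof -
    consider "real (Suc n) * (x - c) - 1 \<le> 0" | "real (Suc n) * (d - x) - 1 \<le> 0"
      using outside[of n] by blast
    then show ?thesis
      by cases (simp_all only: cutoff_0 smooth_step_eq_0 mult_zero_left mult_zero_right)
  qed
  then show ?thesis using False by simp
qed

lemma integral_indicator_greaterThan_eq_0:
  assumes "integrable (lebesgue_on {a<..<b}) h"
    and "\<And>\<psi>. test_fun {a<..<b} \<psi> \<Longrightarrow> integral\<^sup>L (lebesgue_on {a<..<b}) (\<lambda>x. h x * \<psi> x) = 0"
  shows "integral\<^sup>L (lebesgue_on {a<..<b}) (\<lambda>x. h x * indicator {c<..} x) = 0"
proof -
  let ?\<mu> = "lebesgue_on {a<..<b}" and ?c = "max a c"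
  have h: "h \<in> borel_measurable ?\<mu>"
    using assms(1) by (rule borel_measurable_integrable)
  have "(\<lambda>n. integral\<^sup>L ?\<mu> (\<lambda>x. h x * cutoff ?c b n 0 x)) \<longlonglongrightarrow> integral\<^sup>L ?\<mu> (\<lambda>x. h x * indicator {?c<..<b} x)"
  proof (rule integral_dominated_convergence[where w="\<lambda>x. \<bar>h x\<bar>"])
    have "(indicator {?c<..<b} :: real \<Rightarrow> real) \<in> borel_measurable ?\<mu>"
      by (intro measurable_restrict_space1 borel_measurable_indicator) simp
    with h show "(\<lambda>x. h x * indicator {?c<..<b} x) \<in> borel_measurable ?\<mu>"
      by (rule borel_measurable_times)
    show "(\<lambda>x. h x * cutoff ?c b n 0 x) \<in> borel_measurable ?\<mu>" for n
      using h deriv_tower_measurable[OF deriv_tower_cutoff] by (rule borel_measurable_times) simp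
    show "integrable ?\<mu> (\<lambda>x. \<bar>h x\<bar>)" using assms(1) by (rule integrable_abs)
    show "AE x in ?\<mu>. (\<lambda>n. h x * cutoff ?c b n 0 x) \<longlonglongrightarrow> h x * indicator {?c<..<b} x"
      by (intro AE_I2 tendsto_mult_left cutoff_tendsto_indicator)
    have "norm (h x * cutoff ?c b n 0 x) \<le> \<bar>h x\<bar>" for n x
      using abs_cutoff_le_1[of ?c b n x] by (simp add: abs_mult mult_left_le)
    then show "AE x in ?\<mu>. norm (h x * cutoff ?c b n 0 x) \<le> \<bar>h x\<bar>" for n
      by simp
  qed
  moreover have "integral\<^sup>L ?\<mu> (\<lambda>x. h x * cutoff ?c b n 0 x) = 0" for n
    by (rule assms(2)[OF test_fun_cutoff]) simp_all
  ultimately have "(\<lambda>n. 0::real) \<longlonglongrightarrow> integral\<^sup>L ?\<mu> (\<lambda>x. h x * indicator {?c<..<b} x)"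
    by simp
  then have "integral\<^sup>L ?\<mu> (\<lambda>x. h x * indicator {?c<..<b} x) = 0"
    using LIMSEQ_unique[OF tendsto_const] by metis
  moreover have "integral\<^sup>L ?\<mu> (\<lambda>x. h x * indicator {?c<..<b} x) = integral\<^sup>L ?\<mu> (\<lambda>x. h x * indicator {c<..} x)"
    by (rule Bochner_Integration.integral_cong) (auto simp: indicator_def)
  ultimately show ?thesis by simp
qed

lemma fundamental_lemma_calculus_of_variations:
  assumes "integrable (lebesgue_on {a<..<b}) h"
    and "\<And>\<psi>. test_fun {a<..<b} \<psi> \<Longrightarrow> integral\<^sup>L (lebesgue_on {a<..<b}) (\<lambda>x. h x * \<psi> x) = 0"
  shows "AE x in lebesgue_on {a<..<b}. h x = 0"
proof -
  let ?I = "{a<..<b} :: real set"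
  define H where "H x = indicator ?I x * h x" for x
  have "integrable lebesgue H"
    using assms(1) integrable_restrict_space[of ?I lebesgue h] by (simp add: H_def[abs_def])
  moreover have "integral\<^sup>L lebesgue (\<lambda>x. H x * indicator {c<..} x) = 0" for c
    using integral_restrict_space[of ?I lebesgue "\<lambda>x. h x * indicator {c<..} x"]
      integral_indicator_greaterThan_eq_0[OF assms, of c]
    by (simp add: H_def mult.assoc)
  ultimately have "AE x in lebesgue. H x = 0"
    by (rule AE_eq_0_if_integral_greaterThan_eq_0)
  then have "AE x in lebesgue. x \<in> ?I \<longrightarrow> h x = 0"
    by eventually_elim (simp add: H_def indicator_def)
  then show ?thesis
    by (simp add: AE_restrict_space_iff)
qed

lemma weak_deriv_of_unique:
  assumes "L2_on {a<..<b} g1" "L2_on {a<..<b} g2"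
    and "weak_deriv_of {a<..<b} k f g1" "weak_deriv_of {a<..<b} k f g2"
  shows "AE x in lebesgue_on {a<..<b}. g1 x = g2 x"
proof -
  let ?I = "{a<..<b} :: real set"
  have I: "?I \<in> sets lebesgue" "?I \<in> lmeasurable" by auto
  have "AE x in lebesgue_on ?I. g1 x - g2 x = 0"
  proof (rule fundamental_lemma_calculus_of_variations)
    show "integrable (lebesgue_on ?I) (\<lambda>x. g1 x - g2 x)"
      using L2_on_integrable[OF I(2)] assms(1,2) by auto
    fix \<psi> assume \<psi>: "test_fun ?I \<psi>"
    have "(-1)^k * integral\<^sup>L (lebesgue_on ?I) (\<lambda>x. g1 x * \<psi> x) = (-1)^k * integral\<^sup>L (lebesgue_on ?I) (\<lambda>x. g2 x * \<psi> x)"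
      using weak_deriv_ofD(3)[OF I(1) assms(3) \<psi>] weak_deriv_ofD(3)[OF I(1) assms(4) \<psi>] by simp
    then have "integral\<^sup>L (lebesgue_on ?I) (\<lambda>x. g1 x * \<psi> x) = integral\<^sup>L (lebesgue_on ?I) (\<lambda>x. g2 x * \<psi> x)"
      by simp
    then show "integral\<^sup>L (lebesgue_on ?I) (\<lambda>x. (g1 x - g2 x) * \<psi> x) = 0"
      using weak_deriv_ofD(2)[OF I(1) assms(3) \<psi>] weak_deriv_ofD(2)[OF I(1) assms(4) \<psi>]
      by (simp add: left_diff_distrib)
  qed
  then show ?thesis by eventually_elim simp
qed

lemma Hm_norm_eq_sqrt_sum:
  assumes "\<And>k. k \<le> m \<Longrightarrow> L2_on {a<..<b} (G k) \<and> weak_deriv_of {a<..<b} k f (G k)"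
  shows "Hm_norm {a<..<b} m f = sqrt (\<Sum>k\<le>m. integral\<^sup>L (lebesgue_on {a<..<b}) (\<lambda>x. (G k x)^2))"
proof -
  let ?I = "{a<..<b} :: real set"
  have "(LINT x:?I|lebesgue. (weak_deriv ?I k f x)^2) = integral\<^sup>L (lebesgue_on ?I) (\<lambda>x. (G k x)^2)"
    if "k \<le> m" for k
  proof -
    have G: "L2_on ?I (G k)" "weak_deriv_of ?I k f (G k)" using assms that by auto
    then have W: "L2_on ?I (weak_deriv ?I k f) \<and> weak_deriv_of ?I k f (weak_deriv ?I k f)"
      unfolding weak_deriv_def by (intro someI_ex[of "\<lambda>g. L2_on ?I g \<and> weak_deriv_of ?I k f g"]) blast
    have [measurable]: "weak_deriv ?I k f \<in> borel_measurable (lebesgue_on ?I)" "G k \<in> borel_measurable (lebesgue_on ?I)"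
      using W G by (simp_all add: L2_on_iff)
    have "AE x in lebesgue_on ?I. weak_deriv ?I k f x = G k x"
      using weak_deriv_of_unique W G by blast
    then have "integral\<^sup>L (lebesgue_on ?I) (\<lambda>x. (weak_deriv ?I k f x)^2) = integral\<^sup>L (lebesgue_on ?I) (\<lambda>x. (G k x)^2)"
      by (intro integral_cong_AE) auto
    then show ?thesis by (simp add: set_integral_lebesgue_on)
  qed
  then show ?thesis unfolding Hm_norm_def by (intro arg_cong[of _ _ sqrt] sum.cong) auto
qed

section \<open>Multipliers converging to zero\<close>

lemma abs_leibniz_prod_le:
  assumes "\<And>l. l \<le> k \<Longrightarrow> \<bar>A l x\<bar> \<le> C"
  shows "\<bar>leibniz_prod A g k x\<bar> \<le> C * (\<Sum>i\<le>k. real (k choose i) * \<bar>g (k - i) x\<bar>)"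
proof -
  have "\<bar>leibniz_prod A g k x\<bar> \<le> (\<Sum>i\<le>k. real (k choose i) * (\<bar>A i x\<bar> * \<bar>g (k - i) x\<bar>))"
    unfolding leibniz_prod_def by (rule order_trans[OF sum_abs]) (simp add: abs_mult)
  also have "\<dots> \<le> (\<Sum>i\<le>k. real (k choose i) * (C * \<bar>g (k - i) x\<bar>))"
    using assms by (intro sum_mono mult_left_mono mult_right_mono) auto
  finally show ?thesis by (simp add: sum_distrib_left algebra_simps)
qed

lemma leibniz_prod_tendsto_0:
  assumes "\<And>l. l \<le> k \<Longrightarrow> (\<lambda>j. A j l x) \<longlonglongrightarrow> 0"
  shows "(\<lambda>j. leibniz_prod (A j) g k x) \<longlonglongrightarrow> 0"
  unfolding leibniz_prod_def
  using assms by (intro tendsto_null_sum tendsto_mult_right_zero tendsto_mult_left_zero) auto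

lemma integral_leibniz_prod_square_tendsto_0:
  assumes "open I" "bounded I" "\<And>j. deriv_tower UNIV (A j)"
    and "\<And>j l x. l \<le> k \<Longrightarrow> x \<in> I \<Longrightarrow> \<bar>A j l x\<bar> \<le> C"
    and "\<And>l x. l \<le> k \<Longrightarrow> x \<in> I \<Longrightarrow> (\<lambda>j. A j l x) \<longlonglongrightarrow> 0"
    and "\<And>i. i \<le> k \<Longrightarrow> L2_on I (g i)"
  shows "(\<lambda>j. integral\<^sup>L (lebesgue_on I) (\<lambda>x. (leibniz_prod (A j) g k x)^2)) \<longlonglongrightarrow> 0"
proof -
  have I: "I \<in> sets lebesgue" using assms(1) by simp
  define G where "G x = C * (\<Sum>i\<le>k. real (k choose i) * \<bar>g (k - i) x\<bar>)" for x
  have "L2_on I G"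
    unfolding G_def using assms(6) by (intro L2_on_cmult[OF I] L2_on_sum[OF I] L2_on_abs[OF I]) auto
  have "(\<lambda>j. integral\<^sup>L (lebesgue_on I) (\<lambda>x. (leibniz_prod (A j) g k x)^2)) \<longlonglongrightarrow> integral\<^sup>L (lebesgue_on I) (\<lambda>x. 0)"
  proof (rule integral_dominated_convergence[where w="\<lambda>x. (G x)^2"])
    show "(\<lambda>x. 0::real) \<in> borel_measurable (lebesgue_on I)" by simp
    show "(\<lambda>x. (leibniz_prod (A j) g k x)^2) \<in> borel_measurable (lebesgue_on I)" for j
    proof -
      have "L2_on I (leibniz_prod (A j) g k)"
        by (rule L2_on_leibniz_prod[of I "A j" k g k]) (use assms in auto)
      then show ?thesis using I by (auto simp: L2_on_iff dest: borel_measurable_integrable)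
    qed
    show "integrable (lebesgue_on I) (\<lambda>x. (G x)^2)"
      using \<open>L2_on I G\<close> I by (simp add: L2_on_iff)
    show "AE x in lebesgue_on I. (\<lambda>j. (leibniz_prod (A j) g k x)^2) \<longlonglongrightarrow> 0"
      using I assms(5) by (intro AE_I2 tendsto_null_power leibniz_prod_tendsto_0) auto
    have "\<bar>leibniz_prod (A j) g k x\<bar>^2 \<le> (G x)^2" if "x \<in> I" for j x
      unfolding G_def using that assms(4) by (intro power_mono abs_leibniz_prod_le) auto
    then show "AE x in lebesgue_on I. norm ((leibniz_prod (A j) g k x)^2) \<le> (G x)^2" for j
      using I by (intro AE_I2) simp
  qed
  then show ?thesis by simp
qed

theorem Hm_norm_mult_tendsto_0:
  assumes "\<And>j. deriv_tower UNIV (A j)"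
    and "\<And>j l x. l \<le> m \<Longrightarrow> x \<in> {a<..<b} \<Longrightarrow> \<bar>A j l x\<bar> \<le> C"
    and "\<And>l x. l \<le> m \<Longrightarrow> x \<in> {a<..<b} \<Longrightarrow> (\<lambda>j. A j l x) \<longlonglongrightarrow> 0"
    and "in_Hm {a<..<b} m \<phi>"
  shows "(\<lambda>j. Hm_norm {a<..<b} m (\<lambda>x. A j 0 x * \<phi> x)) \<longlonglongrightarrow> 0"
proof -
  let ?I = "{a<..<b} :: real set" and ?g = "weak_derivs {a<..<b} \<phi>"
  have I: "open ?I" "bounded ?I" by auto
  have "Hm_norm ?I m (\<lambda>x. A j 0 x * \<phi> x)
      = sqrt (\<Sum>k\<le>m. integral\<^sup>L (lebesgue_on ?I) (\<lambda>x. (leibniz_prod (A j) ?g k x)^2))" for j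
    using weak_deriv_of_leibniz_rule[OF I assms(1) assms(4)] by (intro Hm_norm_eq_sqrt_sum) auto
  moreover have "(\<lambda>j. sqrt (\<Sum>k\<le>m. integral\<^sup>L (lebesgue_on ?I) (\<lambda>x. (leibniz_prod (A j) ?g k x)^2)))
      \<longlonglongrightarrow> sqrt (\<Sum>k\<le>m. 0)"
  proof (intro tendsto_real_sqrt tendsto_sum integral_leibniz_prod_square_tendsto_0[OF I assms(1)])
    fix k assume "k \<in> {..m}"
    then show "\<bar>A j l x\<bar> \<le> C" "(\<lambda>j. A j l x) \<longlonglongrightarrow> 0" if "l \<le> k" "x \<in> ?I" for j l x
      using that assms(2,3) by auto
    show "L2_on ?I (?g i)" if "i \<le> k" for i
      using in_Hm_weak_derivs[OF I assms(4)] that \<open>k \<in> {..m}\<close> by auto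
  qed
  ultimately show ?thesis by simp
qed

section \<open>The sequence \<open>\<alpha>\<^sub>j\<close>\<close>

text \<open>The summand \<open>2 / T\<close> keeps the support \<open>[T/2, T/2 + 1/s]\<close> of the spike inside \<open>(0, T)\<close>.\<close>

definition spike_scale :: "real \<Rightarrow> nat \<Rightarrow> real" where
  "spike_scale T j = real j + 1 + 2 / T"

definition spike_coeff :: "nat \<Rightarrow> real" where
  "spike_coeff r = 1 / (1 + (\<Sum>k\<le>r. bump_sup k))"

definition spike :: "real \<Rightarrow> nat \<Rightarrow> nat \<Rightarrow> nat \<Rightarrow> real \<Rightarrow> real" where
  "spike T r j = affine_tower (spike_coeff r / spike_scale T j ^ r) (spike_scale T j)
     (- spike_scale T j * (T / 2)) bump"

lemma spike_scale_ge_1: "T > 0 \<Longrightarrow> 1 \<le> spike_scale T j"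
  by (simp add: spike_scale_def)

lemma inverse_spike_scale_less:
  assumes "T > 0"
  shows "1 / spike_scale T j < T / 2"
proof -
  have "2 / T < spike_scale T j" "0 < spike_scale T j"
    using assms by (simp_all add: spike_scale_def add_pos_pos)
  then show ?thesis using assms by (simp add: field_simps)
qed

lemma spike_scale_eventually_ge:
  assumes "y > 0"
  shows "eventually (\<lambda>j. 1 \<le> spike_scale T j * y) sequentially"
proof -
  obtain N :: nat where N: "real N > 1 / y - 2 / T"
    using reals_Archimedean2 by blast
  have "1 \<le> spike_scale T j * y" if "N \<le> j" for j
  proof -
    have "real N \<le> real j" using that by simp
    then have "1 / y \<le> spike_scale T j"
      using N unfolding spike_scale_def by linarith
    then show ?thesis using assms by (simp add: field_simps)
  qed
  then show ?thesis by (rule eventually_sequentiallyI)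
qed

lemma spike_coeff_pos: "spike_coeff r > 0"
  unfolding spike_coeff_def using sum_nonneg[of "{..r}" bump_sup] bump_sup_nonneg by force

lemma spike_coeff_mult_sum_le_1: "spike_coeff r * (\<Sum>k\<le>r. bump_sup k) \<le> 1"
  unfolding spike_coeff_def using sum_nonneg[of "{..r}" bump_sup] bump_sup_nonneg by force

lemma spike_eq:
  "spike T r j k x = spike_coeff r * (spike_scale T j ^ k / spike_scale T j ^ r) * bump k (spike_scale T j * (x - T / 2))"
  by (simp add: spike_def affine_tower_def algebra_simps)

lemma deriv_tower_spike: "deriv_tower UNIV (spike T r j)"
  unfolding spike_def by (intro deriv_tower_affine deriv_tower_bump)

lemma abs_spike_le:
  assumes "T > 0" "k \<le> r"
  shows "\<bar>spike T r j k x\<bar> \<le> spike_coeff r * bump_sup k"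
proof -
  let ?s = "spike_scale T j"
  have s: "1 \<le> ?s" by (rule spike_scale_ge_1[OF assms(1)])
  have "?s ^ k \<le> ?s ^ r" by (rule power_increasing[OF assms(2) s])
  then have q: "?s ^ k / ?s ^ r \<le> 1" using s by simp
  have "\<bar>spike T r j k x\<bar> = spike_coeff r * (?s ^ k / ?s ^ r) * \<bar>bump k (?s * (x - T / 2))\<bar>"
    using spike_coeff_pos[of r] s by (simp add: spike_eq abs_mult)
  also have "\<dots> \<le> spike_coeff r * 1 * bump_sup k"
    using spike_coeff_pos[of r] q s abs_bump_le_sup[of k] by (intro mult_mono) auto
  finally show ?thesis by simp
qed

lemma abs_spike_le_1:
  assumes "T > 0" "k \<le> r"
  shows "\<bar>spike T r j k x\<bar> \<le> 1"
proof -
  have "bump_sup k \<le> (\<Sum>k\<le>r. bump_sup k)"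
    using assms(2) bump_sup_nonneg by (intro member_le_sum) auto
  then have "spike_coeff r * bump_sup k \<le> 1"
    using spike_coeff_mult_sum_le_1[of r] spike_coeff_pos[of r] by (smt (verit) mult_left_mono)
  then show ?thesis using abs_spike_le[OF assms, of j x] by linarith
qed

lemma spike_tendsto_0:
  assumes "T > 0"
  shows "(\<lambda>j. spike T r j k x) \<longlonglongrightarrow> 0"
proof (cases "x \<le> T / 2")
  case True
  then have "spike_scale T j * (x - T / 2) \<le> 0" for j
    using spike_scale_ge_1[OF assms, of j] by (intro mult_nonneg_nonpos) auto
  then show ?thesis by (simp add: spike_eq bump_eq_0)
next
  case False
  then have "eventually (\<lambda>j. 1 \<le> spike_scale T j * (x - T / 2)) sequentially"
    by (intro spike_scale_eventually_ge) simp
  then have "eventually (\<lambda>j. spike T r j k x = 0) sequentially"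
    by eventually_elim (simp add: spike_eq bump_eq_0)
  then show ?thesis by (rule tendsto_eventually)
qed

lemma test_fun_spike:
  assumes "T > 0"
  shows "test_fun {0<..<T} (spike T r j 0)"
proof (rule test_funI)
  let ?s = "spike_scale T j"
  show "(deriv ^^ k) (spike T r j 0) differentiable (at x)" for k x
    by (rule deriv_tower_differentiable[OF open_UNIV deriv_tower_spike]) simp
  show "compact {T / 2 .. T / 2 + 1 / ?s}" by simp
  show "{T / 2 .. T / 2 + 1 / ?s} \<subseteq> {0<..<T}"
    using assms inverse_spike_scale_less[OF assms, of j] by auto
  show "x \<in> {T / 2 .. T / 2 + 1 / ?s}" if "spike T r j 0 x \<noteq> 0" for x
  proof -
    have "bump 0 (?s * (x - T / 2)) \<noteq> 0"
      using that by (auto simp: spike_eq)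
    then have "0 < ?s * (x - T / 2)" "?s * (x - T / 2) < 1"
      using bump_eq_0 by (meson not_le)+
    then show ?thesis
      using spike_scale_ge_1[OF assms, of j] by (simp add: field_simps zero_less_mult_iff)
  qed
qed

lemma W_inf_norm_spike:
  "W_inf_norm I r (spike T r j 0) = (\<Sum>k\<le>r. SUP x\<in>I. \<bar>spike T r j k x\<bar>)"
  unfolding W_inf_norm_def deriv_tower_funpow_deriv[OF open_UNIV deriv_tower_spike UNIV_I] ..

lemma W_inf_norm_spike_le_1:
  assumes "T > 0"
  shows "W_inf_norm {0<..<T} r (spike T r j 0) \<le> 1"
proof -
  have "(SUP x\<in>{0<..<T}. \<bar>spike T r j k x\<bar>) \<le> spike_coeff r * bump_sup k" if "k \<le> r" for k
    using assms abs_spike_le[OF assms that] by (intro cSUP_least) auto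
  then have "W_inf_norm {0<..<T} r (spike T r j 0) \<le> (\<Sum>k\<le>r. spike_coeff r * bump_sup k)"
    unfolding W_inf_norm_spike by (intro sum_mono) auto
  also have "\<dots> \<le> 1"
    using spike_coeff_mult_sum_le_1 by (simp add: sum_distrib_left)
  finally show ?thesis .
qed

lemma W_inf_norm_spike_ge:
  assumes "T > 0" "bump r t \<noteq> 0"
  shows "spike_coeff r * \<bar>bump r t\<bar> \<le> W_inf_norm {0<..<T} r (spike T r j 0)"
proof -
  let ?s = "spike_scale T j" and ?I = "{0<..<T}"
  have s: "1 \<le> ?s" "1 / ?s < T / 2" using spike_scale_ge_1 inverse_spike_scale_less assms(1) by auto
  have t: "0 < t" "t < 1" using assms(2) bump_eq_0[of t r] by (auto simp: not_le[symmetric])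
  define x where "x = T / 2 + t / ?s"
  have "t / ?s < 1 / ?s" "0 < t / ?s" using t s by (auto intro: divide_strict_right_mono)
  then have x: "x \<in> ?I"
    using s assms(1) unfolding x_def greaterThanLessThan_iff by linarith
  have bdd: "bdd_above ((\<lambda>x. \<bar>spike T r j k x\<bar>) ` ?I)" if "k \<le> r" for k
    using abs_spike_le_1[OF assms(1) that] by (intro bdd_aboveI2) blast
  have "spike_coeff r * \<bar>bump r t\<bar> = \<bar>spike T r j r x\<bar>"
    using s spike_coeff_pos[of r] by (simp add: spike_eq x_def abs_mult field_simps)
  also have "\<dots> \<le> (SUP x\<in>?I. \<bar>spike T r j r x\<bar>)"
    by (rule cSUP_upper[OF x bdd]) simp
  also have "\<dots> \<le> (\<Sum>k\<le>r. SUP x\<in>?I. \<bar>spike T r j k x\<bar>)"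
  proof (rule member_le_sum)
    show "0 \<le> (SUP x\<in>?I. \<bar>spike T r j k x\<bar>)" if "k \<in> {..r} - {r}" for k
      using that by (intro order_trans[OF abs_ge_zero cSUP_upper[OF x bdd]]) auto
  qed auto
  finally show ?thesis unfolding W_inf_norm_spike .
qed

theorem lemma3p4:
  fixes T :: real and r :: nat
  assumes "T > 0"
  shows "\<exists>\<gamma>>0. \<exists>\<alpha> :: nat \<Rightarrow> real \<Rightarrow> real.
           (\<forall>j. test_fun {0<..<T} (\<alpha> j) \<and>
                \<gamma> \<le> W_inf_norm {0<..<T} r (\<alpha> j) \<and> W_inf_norm {0<..<T} r (\<alpha> j) \<le> 1) \<and>
           (\<forall>m\<le>r. \<forall>\<phi>. in_Hm {0<..<T} m \<phi> \<longrightarrow>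
              (\<forall>j. in_Hm {0<..<T} m (\<lambda>x. \<alpha> j x * \<phi> x)) \<and>
              (\<lambda>j. Hm_norm {0<..<T} m (\<lambda>x. \<alpha> j x * \<phi> x)) \<longlonglongrightarrow> 0)"
proof -
  obtain t where t: "bump r t \<noteq> 0" using bump_not_identically_0 ..
  define \<gamma> where "\<gamma> = spike_coeff r * \<bar>bump r t\<bar>"
  let ?\<alpha> = "\<lambda>j. spike T r j 0"
  have "\<gamma> > 0" using spike_coeff_pos t by (simp add: \<gamma>_def)
  moreover have "test_fun {0<..<T} (?\<alpha> j) \<and>
      \<gamma> \<le> W_inf_norm {0<..<T} r (?\<alpha> j) \<and> W_inf_norm {0<..<T} r (?\<alpha> j) \<le> 1" for j
    using test_fun_spike[OF assms] W_inf_norm_spike_ge[OF assms t] W_inf_norm_spike_le_1[OF assms]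
    unfolding \<gamma>_def by blast
  moreover have "in_Hm {0<..<T} m (\<lambda>x. ?\<alpha> j x * \<phi> x)"
    if "in_Hm {0<..<T} m \<phi>" for m j \<phi>
    by (rule in_Hm_mult[OF _ _ deriv_tower_spike that]) auto
  moreover have "(\<lambda>j. Hm_norm {0<..<T} m (\<lambda>x. ?\<alpha> j x * \<phi> x)) \<longlonglongrightarrow> 0"
    if "m \<le> r" "in_Hm {0<..<T} m \<phi>" for m \<phi>
  proof (rule Hm_norm_mult_tendsto_0[OF deriv_tower_spike _ _ that(2)])
    show "\<bar>spike T r j l x\<bar> \<le> 1" if "l \<le> m" for j l x
      using abs_spike_le_1[OF assms] that \<open>m \<le> r\<close> by simp
    show "(\<lambda>j. spike T r j l x) \<longlonglongrightarrow> 0" for l x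
      by (rule spike_tendsto_0[OF assms])
  qed
  ultimately show ?thesis
    by (intro exI[of _ \<gamma>] conjI exI[of _ ?\<alpha>] allI impI) auto
qed

end
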